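(* Let $n\ge 6$ be even, let $j\in\{1,2,3,4\}$, and let $t\in D$ lie in the $j$-th segment of level $n$, i.e. $M_{n-1}+(j-1)2^{n-3}<t\le M_{n-1}+j\,2^{n-3}$. Then $4t-1$, $4t+1$, $4t+3$ all belong to $D$ and all lie in the $j$-th segment of level $n+2$, i.e. in the interval $\big(M_{n+1}+(j-1)2^{n-1},\ M_{n+1}+j\,2^{n-1}\big]$.
   Context: Let $D$ (OEIS A036991) be the set of nonnegative integers $m$ such that, reading the binary expansion of $m$ from the least significant bit to the most significant bit, at every point the number of 1's read so far is at least the number of 0's read so far. Let $M_n=2^n-1$. For even $n\ge 6$ the interval $(M_{n-1},M_n]$ (the $n$-level, of length $2^{n-1}$) is divided into four equal segments $(M_{n-1}+(j-1)2^{n-3},\,M_{n-1}+j\,2^{n-3}]$, $j=1,2,3,4$. *)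

theory Defs
  imports Main
begin

fun bin_digits :: "nat \<Rightarrow> nat list" where
  "bin_digits m = (if m = 0 then [] else m mod 2 # bin_digits (m div 2))"

text \<open>The set D (OEIS A036991): reading the binary expansion from the least significant
bit, every prefix contains at least as many 1's as 0's.\<close>
definition D :: "nat set" where
  "D = {m. \<forall>k \<le> length (bin_digits m).
            length (filter (\<lambda>b. b = 0) (take k (bin_digits m)))
              \<le> length (filter (\<lambda>b. b = 1) (take k (bin_digits m)))}"

definition M :: "nat \<Rightarrow> nat" where
  "M n = 2 ^ n - 1"

end

theory Submission
  imports Defs
begin

text \<open>Prepending the bits 11, 01 or 011 to the binary expansion of an odd t \<in> D (whose lowest
bit is necessarily 1) yields 4t+3, 4t+1 and 4t-1, and the running excess of 1's over 0's stays
nonnegative, so these numbers lie in D. Multiplying by 4 and adding 3 maps the endpoints of the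
j-th segment of level n onto those of level n+2; since t and the lower endpoint are both odd,
t exceeds that endpoint by at least 2, which leaves room for 4t-1.\<close>

definition excess :: "nat list \<Rightarrow> int" where
  "excess xs = int (length (filter (\<lambda>b. b = 1) xs)) - int (length (filter (\<lambda>b. b = 0) xs))"

fun balanced_from :: "int \<Rightarrow> nat list \<Rightarrow> bool" where
  "balanced_from c [] \<longleftrightarrow> 0 \<le> c"
| "balanced_from c (x # xs) \<longleftrightarrow> 0 \<le> c \<and> balanced_from (c + excess [x]) xs"

lemma excess_single [simp]: "excess [0] = -1" "excess [Suc 0] = 1"
  by (simp_all add: excess_def)

lemma balanced_from_iff_prefixes:
  "balanced_from c xs \<longleftrightarrow> (\<forall>k \<le> length xs. 0 \<le> c + excess (take k xs))"
proof (induction xs arbitrary: c)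
  case Nil
  then show ?case by (simp add: excess_def)
next
  case (Cons x xs)
  have "(\<forall>k \<le> length (x # xs). 0 \<le> c + excess (take k (x # xs)))
      \<longleftrightarrow> 0 \<le> c \<and> (\<forall>k \<le> length xs. 0 \<le> c + excess [x] + excess (take k xs))"
    unfolding length_Cons le_simps(2)[symmetric] All_less_Suc2
    by (simp add: excess_def algebra_simps)
  with Cons.IH show ?case by simp
qed

lemma mem_D_iff_balanced: "m \<in> D \<longleftrightarrow> balanced_from 0 (bin_digits m)"
  by (simp add: D_def balanced_from_iff_prefixes excess_def del: bin_digits.simps)

lemma balanced_from_mono: "balanced_from c xs \<Longrightarrow> c \<le> d \<Longrightarrow> balanced_from d xs"
  by (induction xs arbitrary: c d) force+

lemma balanced_from_nonneg: "balanced_from c xs \<Longrightarrow> 0 \<le> c"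
  by (cases xs) auto

lemma bin_digits_Suc_double: "bin_digits (Suc (2 * m)) = 1 # bin_digits m"
  by simp

lemma bin_digits_double: "0 < m \<Longrightarrow> bin_digits (2 * m) = 0 # bin_digits m"
  by simp

declare bin_digits.simps [simp del]

lemma odd_if_mem_D:
  assumes "m \<in> D" and "0 < m"
  shows "odd m"
proof
  assume "even m"
  then obtain k where "m = 2 * k" and "0 < k"
    using \<open>0 < m\<close> by (auto elim: evenE)
  with \<open>m \<in> D\<close> have "balanced_from (-1) (bin_digits k)"
    by (simp add: mem_D_iff_balanced bin_digits_double)
  then show False
    using balanced_from_nonneg by fastforce
qed

lemma four_mul_neighbours_mem_D:
  assumes "t \<in> D" and "0 < t" and "s \<in> {4 * t - 1, 4 * t + 1, 4 * t + 3}"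
  shows "s \<in> D"
proof -
  obtain u where t: "t = Suc (2 * u)"
    using odd_if_mem_D[OF assms(1,2)] by (auto elim: oddE)
  have bal_u: "balanced_from 1 (bin_digits u)"
    using \<open>t \<in> D\<close> by (simp add: t mem_D_iff_balanced bin_digits_Suc_double)
  have "balanced_from 0 (bin_digits t)"
    using \<open>t \<in> D\<close> by (simp add: mem_D_iff_balanced)
  then have bal_t: "balanced_from c (bin_digits t)" if "0 \<le> c" for c
    using balanced_from_mono that by blast
  have "4 * t + 3 = Suc (2 * Suc (2 * t))" by simp
  then have D3: "4 * t + 3 \<in> D"
    by (simp only: mem_D_iff_balanced bin_digits_Suc_double) (simp add: bal_t)
  have "4 * t + 1 = Suc (2 * (2 * t))" by simp
  then have D1: "4 * t + 1 \<in> D"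
    using \<open>0 < t\<close> by (simp only: mem_D_iff_balanced bin_digits_Suc_double bin_digits_double)
      (simp add: bal_t)
  have "4 * t - 1 = Suc (2 * Suc (2 * (2 * u)))" by (simp add: t)
  moreover have "balanced_from 2 (bin_digits (2 * u))"
  proof (cases "u = 0")
    case True
    then show ?thesis by (simp add: bin_digits.simps)
  next
    case False
    then show ?thesis using bal_u by (simp add: bin_digits_double)
  qed
  ultimately have D0: "4 * t - 1 \<in> D"
    by (simp only: mem_D_iff_balanced bin_digits_Suc_double) simp
  from assms(3) D0 D1 D3 show ?thesis by blast
qed

lemma M_add_2: "M (m + 2) = 4 * M m + 3"
proof -
  have "(2::nat) ^ (m + 2) = 4 * 2 ^ m" by simp
  moreover have "1 \<le> (2::nat) ^ m" by simp
  ultimately show ?thesis unfolding M_def by linarith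
qed

lemma odd_M: "0 < m \<Longrightarrow> odd (M m)"
  by (simp add: M_def)

lemma segment_endpoint_scale:
  assumes "3 \<le> n"
  shows "4 * (M (n - 1) + k * 2 ^ (n - 3)) + 3 = M (n + 1) + k * 2 ^ (n - 1)"
proof -
  have "M (n + 1) = 4 * M (n - 1) + 3"
    using M_add_2[of "n - 1"] assms by simp
  moreover have "(2::nat) ^ (n - 1) = 4 * 2 ^ (n - 3)"
  proof -
    have "n - 1 = (n - 3) + 2" using assms by simp
    then show ?thesis by (simp only: power_add) simp
  qed
  ultimately show ?thesis by simp
qed

lemma four_mul_neighbours_bounds:
  fixes a b t s :: nat
  assumes "odd a" and "odd t" and "a < t" and "t \<le> b"
    and "s \<in> {4 * t - 1, 4 * t + 1, 4 * t + 3}"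
  shows "4 * a + 3 < s \<and> s \<le> 4 * b + 3"
proof -
  have "a + 2 \<le> t"
    using assms(1-3) by presburger
  with assms(4,5) show ?thesis by auto
qed

theorem proposition12:
  fixes n j t :: nat
  assumes "even n" and "n \<ge> 6"
    and "j \<in> {1, 2, 3, 4}"
    and "t \<in> D"
    and "M (n - 1) + (j - 1) * 2 ^ (n - 3) < t" and "t \<le> M (n - 1) + j * 2 ^ (n - 3)"
  shows "\<forall>s \<in> {4 * t - 1, 4 * t + 1, 4 * t + 3}.
           s \<in> D \<and> M (n + 1) + (j - 1) * 2 ^ (n - 1) < s \<and> s \<le> M (n + 1) + j * 2 ^ (n - 1)"
proof
  fix s assume s: "s \<in> {4 * t - 1, 4 * t + 1, 4 * t + 3}"
  have "0 < t" using assms(5) by simp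
  have "odd (M (n - 1) + (j - 1) * 2 ^ (n - 3))"
    using \<open>n \<ge> 6\<close> odd_M[of "n - 1"] by simp
  moreover have "odd t" using odd_if_mem_D \<open>t \<in> D\<close> \<open>0 < t\<close> by blast
  ultimately have "4 * (M (n - 1) + (j - 1) * 2 ^ (n - 3)) + 3 < s
      \<and> s \<le> 4 * (M (n - 1) + j * 2 ^ (n - 3)) + 3"
    using four_mul_neighbours_bounds assms(5,6) s by blast
  moreover have "3 \<le> n" using \<open>n \<ge> 6\<close> by simp
  ultimately have "M (n + 1) + (j - 1) * 2 ^ (n - 1) < s \<and> s \<le> M (n + 1) + j * 2 ^ (n - 1)"
    by (simp only: segment_endpoint_scale)
  with four_mul_neighbours_mem_D[OF \<open>t \<in> D\<close> \<open>0 < t\<close> s]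
  show "s \<in> D \<and> M (n + 1) + (j - 1) * 2 ^ (n - 1) < s \<and> s \<le> M (n + 1) + j * 2 ^ (n - 1)"
    by blast
qed

end
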